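(* Let $(\bar z_1,\bar z_2)\in\mathbb R^d\times\mathbb R^d$. Then $(\bar z_1,\bar z_2)\in \operatorname{Fix} T_{\gamma}^{\mathrm{Ryu}} := \{(z_1,z_2): (z_1,z_2)\in T_{\gamma}^{\mathrm{Ryu}}(z_1,z_2)\}$ if and only if $\bar x := \bar x_1=\bar x_2=\bar x_3$, where $$\bar x_1=\operatorname{prox}_{\gamma f_1}(\bar z_1),\quad \bar x_2=\operatorname{prox}_{\frac{\gamma}{\alpha} f_2}\Big(\tfrac{\bar z_2}{\alpha}+\bar x_1\Big),\quad \bar x_3\in \operatorname{prox}_{\gamma f_3}(\bar x_1-\bar z_1+\bar x_2-\bar z_2).$$ Furthermore, such $\bar x$ is a critical point of $\varphi$ (i.e. $0\in\partial\varphi(\bar x)$), and $\varphi(\bar x)=\varphi_{\gamma}^{\mathrm{Ryu}}(\bar z_1,\bar z_2)$. In particular, if $\alpha\in(0,1)$ and $\gamma\le \min\{\frac{\alpha}{L_1},\frac{1-\alpha}{L_2}\}$, then $\min\varphi=\min\varphi_{\gamma}^{\mathrm{Ryu}}$.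
   Context: Let $f_1,f_2:\mathbb R^d\to\mathbb R$ be convex and $L_i$-smooth (i.e. differentiable with $\nabla f_i$ globally $L_i$-Lipschitz, $L_i>0$), let $f_3:\mathbb R^d\to\mathbb R\cup\{+\infty\}$ be proper and lower semicontinuous, and suppose the problem $\min_{x\in\mathbb R^d}\varphi(x):=f_1(x)+f_2(x)+f_3(x)$ has a nonempty set of solutions. For a function $g$ and $\gamma>0$, $\operatorname{prox}_{\gamma g}(z):=\operatorname{argmin}_{y}\{g(y)+\frac{1}{2\gamma}\|y-z\|^2\}$. Let $\gamma\in(0,\frac{1}{L_1+L_2})$ and $\alpha,\lambda>0$. For $(z_1,z_2)\in\mathbb R^d\times\mathbb R^d$ define $x_1=\operatorname{prox}_{\gamma f_1}(z_1)$, $x_2=\operatorname{prox}_{\frac{\gamma}{\alpha}f_2}(\frac{z_2}{\alpha}+x_1)$, $x_3\in\operatorname{prox}_{\gamma f_3}(x_1-z_1+x_2-z_2)$, and the set-valued operator $T_{\gamma}^{\mathrm{Ryu}}(z_1,z_2)=\{(z_1+\lambda(x_3-x_1),\,z_2+\lambda(x_3-x_2))\}$ over such choices of $x_3$. With $\gamma_1:=\frac{\gamma}{\alpha}$, $\gamma_2:=\frac{\gamma}{1-\alpha}$ (convention $c/0=\infty$, $d/\infty=0$), the relaxed Ryu envelope is $$\varphi_{\gamma}^{\mathrm{Ryu}}(z_1,z_2):=\min_{y\in\mathbb R^d}\Big\{f_3(y)+\sum_{i=1}^2\Big[f_i(x_i)+\langle y-x_i,\nabla f_i(x_i)\rangle+\tfrac{1}{2\gamma_i}\|y-x_i\|^2\Big]\Big\}.$$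 $\partial$ denotes the limiting subdifferential. *)

theory Defs
  imports "HOL-Analysis.Analysis"
begin

definition lsc :: "('a::topological_space \<Rightarrow> ereal) \<Rightarrow> bool" where
  "lsc f \<longleftrightarrow> (\<forall>x. f x \<le> Liminf (at x) f)"

definition proper_fun :: "('a \<Rightarrow> ereal) \<Rightarrow> bool" where
  "proper_fun f \<longleftrightarrow> (\<forall>x. f x \<noteq> -\<infinity>) \<and> (\<exists>x. f x \<noteq> \<infinity>)"

definition prox :: "real \<Rightarrow> ('a::real_normed_vector \<Rightarrow> ereal) \<Rightarrow> 'a \<Rightarrow> 'a set" where
  "prox \<gamma> g z = {y. \<forall>w. g y + ereal (norm (y - z)^2 / (2*\<gamma>)) \<le> g w + ereal (norm (w - z)^2 / (2*\<gamma>))}"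

(* the (unique, for convex real-valued f) proximal point *)
definition prox_pt :: "real \<Rightarrow> ('a::real_normed_vector \<Rightarrow> real) \<Rightarrow> 'a \<Rightarrow> 'a" where
  "prox_pt \<gamma> f z = (THE y. y \<in> prox \<gamma> (\<lambda>x. ereal (f x)) z)"

definition ryu_x1 :: "real \<Rightarrow> ('a::real_normed_vector \<Rightarrow> real) \<Rightarrow> 'a \<Rightarrow> 'a" where
  "ryu_x1 \<gamma> f1 z1 = prox_pt \<gamma> f1 z1"

definition ryu_x2 :: "real \<Rightarrow> real \<Rightarrow> ('a::real_normed_vector \<Rightarrow> real) \<Rightarrow> ('a \<Rightarrow> real) \<Rightarrow> 'a \<Rightarrow> 'a \<Rightarrow> 'a" where
  "ryu_x2 \<gamma> \<alpha> f1 f2 z1 z2 = prox_pt (\<gamma>/\<alpha>) f2 ((1/\<alpha>) *\<^sub>R z2 + ryu_x1 \<gamma> f1 z1)"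

definition T_ryu :: "real \<Rightarrow> real \<Rightarrow> real \<Rightarrow> ('a::real_normed_vector \<Rightarrow> real) \<Rightarrow> ('a \<Rightarrow> real)
    \<Rightarrow> ('a \<Rightarrow> ereal) \<Rightarrow> 'a \<times> 'a \<Rightarrow> ('a \<times> 'a) set" where
  "T_ryu lam \<gamma> \<alpha> f1 f2 f3 z =
     (let z1 = fst z; z2 = snd z; x1 = ryu_x1 \<gamma> f1 z1; x2 = ryu_x2 \<gamma> \<alpha> f1 f2 z1 z2 in
      {(z1 + lam *\<^sub>R (x3 - x1), z2 + lam *\<^sub>R (x3 - x2)) | x3. x3 \<in> prox \<gamma> f3 (x1 - z1 + x2 - z2)})"

definition Fix :: "('b \<Rightarrow> 'b set) \<Rightarrow> 'b set" where
  "Fix T = {z. z \<in> T z}"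

(* Relaxed Ryu envelope; 1/(2\<gamma>1) = \<alpha>/(2\<gamma>), 1/(2\<gamma>2) = (1-\<alpha>)/(2\<gamma>) (with c/0=\<infinity>, d/\<infinity>=0).
   df1, df2 are the gradients of f1, f2. *)
definition ryu_env :: "real \<Rightarrow> real \<Rightarrow> ('a::real_inner \<Rightarrow> real) \<Rightarrow> ('a \<Rightarrow> real) \<Rightarrow> ('a \<Rightarrow> ereal)
    \<Rightarrow> ('a \<Rightarrow> 'a) \<Rightarrow> ('a \<Rightarrow> 'a) \<Rightarrow> 'a \<times> 'a \<Rightarrow> ereal" where
  "ryu_env \<gamma> \<alpha> f1 f2 f3 df1 df2 z =
     (let z1 = fst z; z2 = snd z; x1 = ryu_x1 \<gamma> f1 z1; x2 = ryu_x2 \<gamma> \<alpha> f1 f2 z1 z2 in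
      (INF y. f3 y + ereal (f1 x1 + (y - x1) \<bullet> df1 x1 + \<alpha> / (2*\<gamma>) * norm (y - x1)^2
                          + f2 x2 + (y - x2) \<bullet> df2 x2 + (1 - \<alpha>) / (2*\<gamma>) * norm (y - x2)^2)))"

(* Frechet (regular) subdifferential, liminf condition written in epsilon-delta form *)
definition frechet_subdiff :: "('a::real_inner \<Rightarrow> ereal) \<Rightarrow> 'a \<Rightarrow> 'a set" where
  "frechet_subdiff f x = {v. \<bar>f x\<bar> \<noteq> \<infinity> \<and>
     (\<forall>\<epsilon>>0. \<exists>\<delta>>0. \<forall>y. norm (y - x) < \<delta> \<longrightarrow>
        f x + ereal (v \<bullet> (y - x) - \<epsilon> * norm (y - x)) \<le> f y)}"

definition limiting_subdiff :: "('a::real_inner \<Rightarrow> ereal) \<Rightarrow> 'a \<Rightarrow> 'a set" where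
  "limiting_subdiff f x = {v. \<bar>f x\<bar> \<noteq> \<infinity> \<and>
     (\<exists>xs vs. xs \<longlonglongrightarrow> x \<and> (\<lambda>k. f (xs k)) \<longlonglongrightarrow> f x \<and>
        (\<forall>k. vs k \<in> frechet_subdiff f (xs k)) \<and> vs \<longlonglongrightarrow> v)}"

end

theory Submission
  imports Defs
begin

text \<open>If \<open>x\<^sub>1 = x\<^sub>2 = x\<^sub>3 = x\<close>, the optimality conditions of the two smooth proximal steps
  read \<open>z\<^sub>1 = x + \<gamma> \<nabla>f\<^sub>1(x)\<close> and \<open>z\<^sub>2 = \<gamma> \<nabla>f\<^sub>2(x)\<close>, so the third step says that \<open>x\<close> is a
  fixed point of the forward-backward map \<open>x \<mapsto> prox \<gamma> f\<^sub>3 (x - \<gamma> \<nabla>(f\<^sub>1 + f\<^sub>2)(x))\<close>.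
  With the gradient inequality this gives \<open>\<phi> x \<le> \<phi> y + \<parallel>y - x\<parallel>\<^sup>2 / (2\<gamma>)\<close> for all \<open>y\<close>, so \<open>0\<close>
  is a Frechet, hence limiting, subgradient at \<open>x\<close>, and the infimum defining the envelope is
  attained at \<open>y = x\<close> with value \<open>\<phi> x\<close>. Conversely, by the descent lemma a minimiser \<open>x\<close> of \<open>\<phi>\<close>
  is a forward-backward fixed point, so it arises from the Ryu fixed point
  \<open>(x + \<gamma> \<nabla>f\<^sub>1(x), \<gamma> \<nabla>f\<^sub>2(x))\<close>; and when \<open>\<gamma> L\<^sub>1 \<le> \<alpha>\<close> and \<open>\<gamma> L\<^sub>2 \<le> 1 - \<alpha>\<close>, the descent lemma
  shows that the function minimised in the envelope majorises \<open>\<phi>\<close>, so no envelope value is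
  below \<open>min \<phi>\<close>.\<close>

lemma has_real_derivative_along_line:
  fixes f :: "'a::real_inner \<Rightarrow> real"
  assumes "\<And>x. (f has_derivative (\<lambda>h. df x \<bullet> h)) (at x)"
  shows "((\<lambda>t. f (x + t *\<^sub>R d)) has_real_derivative df (x + t *\<^sub>R d) \<bullet> d) (at t within S)"
proof -
  have "((\<lambda>t. x + t *\<^sub>R d) has_derivative (\<lambda>s. s *\<^sub>R d)) (at t within S)"
    by (auto intro!: derivative_eq_intros)
  from has_derivative_compose[OF this assms]
  have "((\<lambda>t. f (x + t *\<^sub>R d)) has_derivative (\<lambda>s. s * (df (x + t *\<^sub>R d) \<bullet> d))) (at t within S)"
    by (simp add: o_def)
  then show ?thesis
    by (simp add: has_field_derivative_def mult_commute_abs)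
qed

lemma convex_on_along_line:
  assumes "convex_on UNIV f"
  shows "convex_on UNIV (\<lambda>t::real. f (x + t *\<^sub>R d))"
proof (rule convex_onI)
  fix t s u :: real assume "0 < t" "t < 1"
  have "x + ((1 - t) *\<^sub>R s + t *\<^sub>R u) *\<^sub>R d = (1 - t) *\<^sub>R (x + s *\<^sub>R d) + t *\<^sub>R (x + u *\<^sub>R d)"
    by (simp add: algebra_simps)
  then show "f (x + ((1 - t) *\<^sub>R s + t *\<^sub>R u) *\<^sub>R d) \<le> (1 - t) * f (x + s *\<^sub>R d) + t * f (x + u *\<^sub>R d)"
    using convex_onD[OF assms, of t] \<open>0 < t\<close> \<open>t < 1\<close> by simp
qed simp

lemma convex_on_gradient_inequality:
  fixes f :: "'a::real_inner \<Rightarrow> real"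
  assumes "convex_on UNIV f" and "\<And>x. (f has_derivative (\<lambda>h. df x \<bullet> h)) (at x)"
  shows "f x + df x \<bullet> (y - x) \<le> f y"
proof -
  have "df x \<bullet> (y - x) * (1 - 0) \<le> f (x + 1 *\<^sub>R (y - x)) - f (x + 0 *\<^sub>R (y - x))"
    by (rule convex_on_imp_above_tangent[OF convex_on_along_line[OF assms(1)]])
      (use has_real_derivative_along_line[OF assms(2), of x "y - x" 0 UNIV] in auto)
  then show ?thesis by simp
qed

lemma descent_lemma:
  fixes f :: "'a::real_inner \<Rightarrow> real"
  assumes grad: "\<And>x. (f has_derivative (\<lambda>h. df x \<bullet> h)) (at x)"
    and lip: "L-lipschitz_on UNIV df"
  shows "f y \<le> f x + df x \<bullet> (y - x) + L / 2 * norm (y - x)^2"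
proof -
  define d where "d = y - x"
  define p where "p t = f (x + t *\<^sub>R d) - t * (df x \<bullet> d) - L / 2 * t^2 * norm d ^ 2" for t
  have "p 1 \<le> p 0"
  proof (rule DERIV_nonpos_imp_nonincreasing[where f = p])
    fix t :: real assume t: "0 \<le> t" "t \<le> 1"
    have "(df (x + t *\<^sub>R d) - df x) \<bullet> d \<le> norm (df (x + t *\<^sub>R d) - df x) * norm d"
      by (rule norm_cauchy_schwarz)
    also have "\<dots> \<le> L * norm (t *\<^sub>R d) * norm d"
      using lipschitz_onD[OF lip, of "x + t *\<^sub>R d" x] by (simp add: dist_norm mult_right_mono)
    also have "\<dots> = L * t * norm d ^ 2"
      using t by (simp add: power2_eq_square)
    finally have "df (x + t *\<^sub>R d) \<bullet> d - df x \<bullet> d - L / 2 * (2 * t) * norm d ^ 2 \<le> 0"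
      by (simp add: inner_diff_left)
    moreover have "(p has_real_derivative df (x + t *\<^sub>R d) \<bullet> d - df x \<bullet> d - L / 2 * (2 * t) * norm d ^ 2) (at t)"
      unfolding p_def using has_real_derivative_along_line[OF grad, of x d t UNIV]
      by (auto intro!: derivative_eq_intros)
    ultimately show "\<exists>y. (p has_real_derivative y) (at t) \<and> y \<le> 0" by blast
  qed simp
  then show ?thesis by (simp add: p_def d_def)
qed

lemma mem_prox_iff:
  "x \<in> prox \<gamma> g z \<longleftrightarrow>
     (\<forall>y. g x \<le> g y + ereal ((norm (y - z)^2 - norm (x - z)^2) / (2*\<gamma>)))"
proof -
  have "g x + ereal a \<le> g y + ereal b \<longleftrightarrow> g x \<le> g y + ereal (b - a)" for y a b
    by (cases "g x"; cases "g y") auto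
  then show ?thesis
    unfolding prox_def by (simp add: diff_divide_distrib)
qed

lemma mem_prox_shifted_iff:
  fixes v :: "'a::real_inner"
  assumes "\<gamma> > 0"
  shows "x \<in> prox \<gamma> g (x - \<gamma> *\<^sub>R v) \<longleftrightarrow>
     (\<forall>y. g x \<le> g y + ereal (v \<bullet> (y - x) + norm (y - x)^2 / (2*\<gamma>)))"
proof -
  have "(norm (y - (x - \<gamma> *\<^sub>R v))^2 - norm (x - (x - \<gamma> *\<^sub>R v))^2) / (2*\<gamma>)
        = v \<bullet> (y - x) + norm (y - x)^2 / (2*\<gamma>)" for y
    using dot_norm[of "y - x" "\<gamma> *\<^sub>R v"] assms
    by (simp add: field_simps inner_commute)
  then show ?thesis
    unfolding mem_prox_iff by simp
qed

lemma prox_objective_strong_growth: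
  fixes f :: "'a::real_inner \<Rightarrow> real"
  assumes conv: "convex_on UNIV f"
    and grad: "\<And>x. (f has_derivative (\<lambda>h. df x \<bullet> h)) (at x)"
    and "\<gamma> > 0" and opt: "z - x = \<gamma> *\<^sub>R df x"
  shows "f x + norm (y - x)^2 / (2*\<gamma>) \<le> f y + (norm (y - z)^2 - norm (x - z)^2) / (2*\<gamma>)"
proof -
  have "(norm (y - z)^2 - norm (x - z)^2) / (2*\<gamma>) = norm (y - x)^2 / (2*\<gamma>) - df x \<bullet> (y - x)"
    using dot_norm[of "y - x" "x - z"] opt \<open>\<gamma> > 0\<close>
    by (simp add: field_simps inner_commute)
  with convex_on_gradient_inequality[OF conv grad, of x y] show ?thesis
    by linarith
qed

lemma prox_smooth_convex_eq:
  fixes f :: "'a::real_inner \<Rightarrow> real"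
  assumes conv: "convex_on UNIV f"
    and grad: "\<And>x. (f has_derivative (\<lambda>h. df x \<bullet> h)) (at x)"
    and "\<gamma> > 0" and opt: "z - x = \<gamma> *\<^sub>R df x"
  shows "prox \<gamma> (\<lambda>x. ereal (f x)) z = {x}"
proof -
  note growth = prox_objective_strong_growth[OF conv grad \<open>\<gamma> > 0\<close> opt]
  have "x \<in> prox \<gamma> (\<lambda>x. ereal (f x)) z"
  proof (unfold mem_prox_iff, intro allI)
    fix y
    have "0 \<le> norm (y - x)^2 / (2*\<gamma>)"
      using \<open>\<gamma> > 0\<close> by simp
    with growth[of y] have "f x \<le> f y + (norm (y - z)^2 - norm (x - z)^2) / (2*\<gamma>)"
      by linarith
    then show "ereal (f x) \<le> ereal (f y) + ereal ((norm (y - z)^2 - norm (x - z)^2) / (2*\<gamma>))"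
      by simp
  qed
  moreover have "y = x" if "y \<in> prox \<gamma> (\<lambda>x. ereal (f x)) z" for y
  proof -
    have "f y \<le> f x + (norm (x - z)^2 - norm (y - z)^2) / (2*\<gamma>)"
      using that unfolding mem_prox_iff by (metis plus_ereal.simps(1) ereal_less_eq(3))
    with growth[of y] have "norm (y - x)^2 / (2*\<gamma>) \<le> 0"
      by (simp add: diff_divide_distrib)
    with \<open>\<gamma> > 0\<close> show "y = x"
      by (simp add: divide_le_0_iff)
  qed
  ultimately show ?thesis by blast
qed

lemma prox_pt_smooth_convex_eq:
  fixes f :: "'a::real_inner \<Rightarrow> real"
  assumes "convex_on UNIV f"
    and "\<And>x. (f has_derivative (\<lambda>h. df x \<bullet> h)) (at x)"
    and "\<gamma> > 0" and "z - x = \<gamma> *\<^sub>R df x"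
  shows "prox_pt \<gamma> f z = x"
  unfolding prox_pt_def prox_smooth_convex_eq[OF assms] by simp

lemma prox_objective_has_minimizer:
  fixes f :: "'a::euclidean_space \<Rightarrow> real"
  assumes conv: "convex_on UNIV f"
    and grad: "\<And>x. (f has_derivative (\<lambda>h. df x \<bullet> h)) (at x)"
    and "\<gamma> > 0"
  shows "\<exists>x. \<forall>y. f x + norm (x - z)^2 / (2*\<gamma>) \<le> f y + norm (y - z)^2 / (2*\<gamma>)"
proof -
  define h where "h y = f y + norm (y - z)^2 / (2*\<gamma>)" for y
  define R where "R = 2 * \<gamma> * norm (df z)"
  have "continuous_on UNIV f"
    using grad has_derivative_continuous continuous_at_imp_continuous_on by blast
  then have "continuous_on (cball z R) f"
    by (rule continuous_on_subset) simp
  then have "continuous_on (cball z R) h"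
    unfolding h_def using \<open>\<gamma> > 0\<close> by (intro continuous_intros) auto
  moreover have "z \<in> cball z R"
    using \<open>\<gamma> > 0\<close> by (simp add: R_def)
  ultimately obtain x where "x \<in> cball z R" and min_ball: "\<forall>y\<in>cball z R. h x \<le> h y"
    using continuous_attains_inf[OF compact_cball] by blast
  have "h z < h y" if "y \<notin> cball z R" for y
  proof -
    \<comment> \<open>outside the ball the quadratic term beats the affine minorant given by the gradient at \<open>z\<close>\<close>
    have far: "R < norm (y - z)"
      using that by (simp add: dist_norm norm_minus_commute)
    have "- (norm (df z) * norm (y - z)) \<le> df z \<bullet> (y - z)"
      using norm_cauchy_schwarz[of "- df z" "y - z"] by simp
    moreover have "0 \<le> R"
      using \<open>\<gamma> > 0\<close> by (simp add: R_def)
    then have "R * norm (y - z) < norm (y - z)^2"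
      unfolding power2_eq_square using far by (intro mult_strict_right_mono) auto
    then have "norm (df z) * norm (y - z) < norm (y - z)^2 / (2*\<gamma>)"
      using \<open>\<gamma> > 0\<close> by (simp add: R_def field_simps)
    ultimately show ?thesis
      using convex_on_gradient_inequality[OF conv grad, of z y] by (simp add: h_def)
  qed
  with min_ball \<open>z \<in> cball z R\<close> have "h x \<le> h y" for y
    by (meson less_le_not_le nle_le order_trans)
  then show ?thesis
    unfolding h_def by blast
qed

lemma prox_optimality_exists:
  fixes f :: "'a::euclidean_space \<Rightarrow> real"
  assumes conv: "convex_on UNIV f"
    and grad: "\<And>x. (f has_derivative (\<lambda>h. df x \<bullet> h)) (at x)"
    and "\<gamma> > 0"
  shows "\<exists>x. z - x = \<gamma> *\<^sub>R df x"
proof -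
  define h where "h y = f y + ((y - z) \<bullet> (y - z)) / (2*\<gamma>)" for y
  obtain x where min: "\<forall>y. h x \<le> h y"
    using prox_objective_has_minimizer[OF conv grad \<open>\<gamma> > 0\<close>, of z]
    by (auto simp: h_def power2_norm_eq_inner)
  define w where "w = df x + (1/\<gamma>) *\<^sub>R (x - z)"
  have "(h has_derivative (\<lambda>k. w \<bullet> k)) (at x)"
    unfolding h_def w_def using \<open>\<gamma> > 0\<close>
    by (auto intro!: derivative_eq_intros grad simp: fun_eq_iff inner_add_right inner_diff_right inner_commute field_simps)
  then have "(\<lambda>k. w \<bullet> k) = (\<lambda>k. 0)"
    using min by (intro differential_zero_maxmin[of x UNIV]) auto
  then have "w \<bullet> w = 0"
    by metis
  then have "\<gamma> *\<^sub>R w = 0"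
    by simp
  then have "z - x = \<gamma> *\<^sub>R df x"
    using \<open>\<gamma> > 0\<close> by (simp add: w_def algebra_simps)
  then show ?thesis ..
qed

lemma prox_pt_optimality:
  fixes f :: "'a::euclidean_space \<Rightarrow> real"
  assumes "convex_on UNIV f"
    and "\<And>x. (f has_derivative (\<lambda>h. df x \<bullet> h)) (at x)"
    and "\<gamma> > 0"
  shows "z - prox_pt \<gamma> f z = \<gamma> *\<^sub>R df (prox_pt \<gamma> f z)"
  using prox_optimality_exists[OF assms] prox_pt_smooth_convex_eq[OF assms] by metis

lemma proper_fun_prox_finite:
  assumes "proper_fun g" and "x \<in> prox \<gamma> g z"
  shows "\<bar>g x\<bar> \<noteq> \<infinity>"
proof -
  obtain y where "g y \<noteq> \<infinity>" and "g x \<noteq> -\<infinity>"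
    using assms(1) unfolding proper_fun_def by blast
  moreover have "g x \<le> g y + ereal ((norm (y - z)^2 - norm (x - z)^2) / (2*\<gamma>))"
    using assms(2) unfolding mem_prox_iff by blast
  ultimately show ?thesis
    by (cases "g x"; cases "g y") auto
qed

lemma zero_mem_frechet_subdiff_of_quadratic_growth:
  fixes g :: "'a::real_inner \<Rightarrow> ereal"
  assumes fin: "\<bar>g x\<bar> \<noteq> \<infinity>" and "c \<ge> 0"
    and growth: "\<And>y. g x \<le> g y + ereal (c * norm (y - x)^2)"
  shows "0 \<in> frechet_subdiff g x"
  unfolding frechet_subdiff_def mem_Collect_eq
proof (intro conjI fin allI impI)
  fix \<epsilon> :: real assume "\<epsilon> > 0"
  show "\<exists>\<delta>>0. \<forall>y. norm (y - x) < \<delta> \<longrightarrow> g x + ereal (0 \<bullet> (y - x) - \<epsilon> * norm (y - x)) \<le> g y"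
  proof (intro exI[of _ "\<epsilon> / (c + 1)"] conjI allI impI)
    show "\<epsilon> / (c + 1) > 0"
      using \<open>\<epsilon> > 0\<close> \<open>c \<ge> 0\<close> by simp
    fix y assume "norm (y - x) < \<epsilon> / (c + 1)"
    then have "c * norm (y - x) + norm (y - x) < \<epsilon>"
      using \<open>c \<ge> 0\<close> by (simp add: field_simps)
    then have "c * norm (y - x) \<le> \<epsilon>"
      using norm_ge_zero[of "y - x"] by linarith
    then have "c * norm (y - x)^2 \<le> \<epsilon> * norm (y - x)"
      by (simp add: power2_eq_square mult_right_mono flip: mult.assoc)
    then show "g x + ereal (0 \<bullet> (y - x) - \<epsilon> * norm (y - x)) \<le> g y"
      using growth[of y] fin by (cases "g x"; cases "g y") auto
  qed
qed

lemma frechet_subdiff_subset_limiting: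
  "frechet_subdiff f x \<subseteq> limiting_subdiff f x"
proof
  fix v assume v: "v \<in> frechet_subdiff f x"
  then have "\<bar>f x\<bar> \<noteq> \<infinity>"
    by (simp add: frechet_subdiff_def)
  with v show "v \<in> limiting_subdiff f x"
    unfolding limiting_subdiff_def by (intro CollectI conjI exI[of _ "\<lambda>k. x"] exI[of _ "\<lambda>k. v"]) auto
qed

lemma INF_ereal_add_eq_of_le:
  fixes g :: "'a \<Rightarrow> ereal"
  assumes "\<And>y. g x \<le> g y + ereal (q y)" and "q x = 0"
  shows "(INF y. g y + ereal (c + q y)) = ereal c + g x"
proof (rule antisym)
  show "(INF y. g y + ereal (c + q y)) \<le> ereal c + g x"
    using INF_lower[of x UNIV "\<lambda>y. g y + ereal (c + q y)"] \<open>q x = 0\<close> by (simp add: add.commute)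
  have "ereal c + g x \<le> g y + ereal (c + q y)" for y
  proof -
    have "ereal c + g x \<le> ereal c + (g y + ereal (q y))"
      using assms(1) by (rule add_left_mono)
    also have "\<dots> = g y + ereal (c + q y)"
      by (metis add.left_commute plus_ereal.simps(1))
    finally show ?thesis .
  qed
  then show "ereal c + g x \<le> (INF y. g y + ereal (c + q y))"
    by (rule INF_greatest)
qed

lemma forward_backward_fixed_point:
  fixes f :: "'a::real_inner \<Rightarrow> real" and g :: "'a \<Rightarrow> ereal"
  assumes conv: "convex_on UNIV f"
    and grad: "\<And>x. (f has_derivative (\<lambda>h. df x \<bullet> h)) (at x)"
    and "proper_fun g" and "\<gamma> > 0"
    and fixed: "x \<in> prox \<gamma> g (x - \<gamma> *\<^sub>R df x)"
  shows "0 \<in> limiting_subdiff (\<lambda>y. ereal (f y) + g y) x"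
    \<comment> \<open>the infimum is the forward-backward envelope of \<open>f + g\<close> at \<open>x\<close>\<close>
    and "(INF y. g y + ereal (f x + df x \<bullet> (y - x) + norm (y - x)^2 / (2*\<gamma>))) = ereal (f x) + g x"
proof -
  have g_growth: "g x \<le> g y + ereal (df x \<bullet> (y - x) + norm (y - x)^2 / (2*\<gamma>))" for y
    using fixed unfolding mem_prox_shifted_iff[OF \<open>\<gamma> > 0\<close>] by blast
  have "ereal (f x) + g x \<le> ereal (f y) + g y + ereal (1 / (2*\<gamma>) * norm (y - x)^2)" for y
  proof -
    have "ereal (f x) + g x \<le> ereal (f x) + (g y + ereal (df x \<bullet> (y - x) + norm (y - x)^2 / (2*\<gamma>)))"
      using g_growth by (rule add_left_mono)
    also have "\<dots> = ereal (f x + df x \<bullet> (y - x)) + g y + ereal (1 / (2*\<gamma>) * norm (y - x)^2)"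
      by (simp add: ac_simps)
    also have "\<dots> \<le> ereal (f y) + g y + ereal (1 / (2*\<gamma>) * norm (y - x)^2)"
      using convex_on_gradient_inequality[OF conv grad, of x y] by (intro add_right_mono) simp
    finally show ?thesis .
  qed
  moreover have "\<bar>ereal (f x) + g x\<bar> \<noteq> \<infinity>"
    using proper_fun_prox_finite[OF \<open>proper_fun g\<close> fixed] by (cases "g x") auto
  ultimately have "0 \<in> frechet_subdiff (\<lambda>y. ereal (f y) + g y) x"
    using \<open>\<gamma> > 0\<close> by (intro zero_mem_frechet_subdiff_of_quadratic_growth[where c = "1 / (2*\<gamma>)"]) auto
  then show "0 \<in> limiting_subdiff (\<lambda>y. ereal (f y) + g y) x"
    using frechet_subdiff_subset_limiting by blast
  show "(INF y. g y + ereal (f x + df x \<bullet> (y - x) + norm (y - x)^2 / (2*\<gamma>))) = ereal (f x) + g x"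
    using INF_ereal_add_eq_of_le[of g x "\<lambda>y. df x \<bullet> (y - x) + norm (y - x)^2 / (2*\<gamma>)" "f x"] g_growth
    by (simp add: add.assoc)
qed

lemma minimizer_forward_backward_fixed_point:
  fixes f :: "'a::real_inner \<Rightarrow> real" and g :: "'a \<Rightarrow> ereal"
  assumes grad: "\<And>x. (f has_derivative (\<lambda>h. df x \<bullet> h)) (at x)"
    and lip: "L-lipschitz_on UNIV df" and "\<gamma> > 0" and "\<gamma> * L \<le> 1"
    and min: "\<And>y. ereal (f x) + g x \<le> ereal (f y) + g y"
  shows "x \<in> prox \<gamma> g (x - \<gamma> *\<^sub>R df x)"
  unfolding mem_prox_shifted_iff[OF \<open>\<gamma> > 0\<close>]
proof
  fix y
  have "\<gamma> * L * norm (y - x)^2 \<le> norm (y - x)^2"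
    using mult_right_mono[OF \<open>\<gamma> * L \<le> 1\<close>, of "norm (y - x)^2"] by simp
  then have "L / 2 * norm (y - x)^2 \<le> norm (y - x)^2 / (2*\<gamma>)"
    using \<open>\<gamma> > 0\<close> by (simp add: field_simps)
  with descent_lemma[OF grad lip, of y x]
  have "f y \<le> f x + (df x \<bullet> (y - x) + norm (y - x)^2 / (2*\<gamma>))"
    by simp
  then have "ereal (f y) + g y \<le> ereal (f x + (df x \<bullet> (y - x) + norm (y - x)^2 / (2*\<gamma>))) + g y"
    by (intro add_right_mono) simp
  also have "\<dots> = ereal (f x) + (g y + ereal (df x \<bullet> (y - x) + norm (y - x)^2 / (2*\<gamma>)))"
    by (simp only: plus_ereal.simps(1)[symmetric] ac_simps)
  finally have "ereal (f x) + g x \<le> ereal (f x) + (g y + ereal (df x \<bullet> (y - x) + norm (y - x)^2 / (2*\<gamma>)))"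
    using min[of y] by (rule order_trans[rotated])
  then show "g x \<le> g y + ereal (df x \<bullet> (y - x) + norm (y - x)^2 / (2*\<gamma>))"
    by (simp add: ereal_add_le_add_iff)
qed

lemma Fix_T_ryu_iff:
  assumes "lam \<noteq> 0"
  shows "(z1, z2) \<in> Fix (T_ryu lam \<gamma> \<alpha> f1 f2 f3) \<longleftrightarrow>
    (\<exists>x3 \<in> prox \<gamma> f3 (ryu_x1 \<gamma> f1 z1 - z1 + ryu_x2 \<gamma> \<alpha> f1 f2 z1 z2 - z2).
        ryu_x1 \<gamma> f1 z1 = ryu_x2 \<gamma> \<alpha> f1 f2 z1 z2 \<and> ryu_x2 \<gamma> \<alpha> f1 f2 z1 z2 = x3)"
  using assms unfolding Fix_def T_ryu_def Let_def by auto

lemma ryu_x1_x2_eq_iff: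
  fixes f1 f2 :: "'a::euclidean_space \<Rightarrow> real"
  assumes conv1: "convex_on UNIV f1" and conv2: "convex_on UNIV f2"
    and grad1: "\<And>x. (f1 has_derivative (\<lambda>h. df1 x \<bullet> h)) (at x)"
    and grad2: "\<And>x. (f2 has_derivative (\<lambda>h. df2 x \<bullet> h)) (at x)"
    and "\<gamma> > 0" and "\<alpha> > 0"
  shows "ryu_x1 \<gamma> f1 z1 = x \<and> ryu_x2 \<gamma> \<alpha> f1 f2 z1 z2 = x \<longleftrightarrow>
    z1 = x + \<gamma> *\<^sub>R df1 x \<and> z2 = \<gamma> *\<^sub>R df2 x"
proof -
  have "\<gamma> / \<alpha> > 0"
    using \<open>\<gamma> > 0\<close> \<open>\<alpha> > 0\<close> by simp
  note opt1 = prox_pt_optimality[OF conv1 grad1 \<open>\<gamma> > 0\<close>]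
    and opt2 = prox_pt_optimality[OF conv2 grad2 \<open>\<gamma> / \<alpha> > 0\<close>]
  show ?thesis
  proof
    assume "ryu_x1 \<gamma> f1 z1 = x \<and> ryu_x2 \<gamma> \<alpha> f1 f2 z1 z2 = x"
    then have x1: "prox_pt \<gamma> f1 z1 = x" and x2: "prox_pt (\<gamma> / \<alpha>) f2 ((1 / \<alpha>) *\<^sub>R z2 + x) = x"
      unfolding ryu_x1_def ryu_x2_def by auto
    have "\<alpha> *\<^sub>R ((1 / \<alpha>) *\<^sub>R z2) = \<alpha> *\<^sub>R ((\<gamma> / \<alpha>) *\<^sub>R df2 x)"
      using opt2[of "(1 / \<alpha>) *\<^sub>R z2 + x"] unfolding x2 by simp
    then have "z2 = \<gamma> *\<^sub>R df2 x"
      using \<open>\<alpha> > 0\<close> by simp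
    with opt1[of z1] show "z1 = x + \<gamma> *\<^sub>R df1 x \<and> z2 = \<gamma> *\<^sub>R df2 x"
      unfolding x1 by (simp add: algebra_simps)
  next
    assume z: "z1 = x + \<gamma> *\<^sub>R df1 x \<and> z2 = \<gamma> *\<^sub>R df2 x"
    then have "ryu_x1 \<gamma> f1 z1 = x"
      unfolding ryu_x1_def by (intro prox_pt_smooth_convex_eq[OF conv1 grad1 \<open>\<gamma> > 0\<close>]) simp
    moreover from this have "ryu_x2 \<gamma> \<alpha> f1 f2 z1 z2 = x"
      unfolding ryu_x2_def using z
      by (intro prox_pt_smooth_convex_eq[OF conv2 grad2 \<open>\<gamma> / \<alpha> > 0\<close>]) simp
    ultimately show "ryu_x1 \<gamma> f1 z1 = x \<and> ryu_x2 \<gamma> \<alpha> f1 f2 z1 z2 = x" ..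
  qed
qed

lemma ryu_env_at_common_point:
  assumes "ryu_x1 \<gamma> f1 z1 = x" and "ryu_x2 \<gamma> \<alpha> f1 f2 z1 z2 = x"
  shows "ryu_env \<gamma> \<alpha> f1 f2 f3 df1 df2 (z1, z2) =
    (INF y. f3 y + ereal (f1 x + f2 x + (df1 x + df2 x) \<bullet> (y - x) + norm (y - x)^2 / (2*\<gamma>)))"
proof -
  have integrand: "f1 x + (y - x) \<bullet> df1 x + \<alpha> / (2*\<gamma>) * norm (y - x)^2
          + f2 x + (y - x) \<bullet> df2 x + (1 - \<alpha>) / (2*\<gamma>) * norm (y - x)^2
        = f1 x + f2 x + (df1 x + df2 x) \<bullet> (y - x) + norm (y - x)^2 / (2*\<gamma>)" for y
    by (simp add: inner_commute diff_divide_distrib algebra_simps)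
  then show ?thesis
    using assms by (simp only: ryu_env_def Let_def fst_conv snd_conv integrand)
qed

lemma ryu_env_lower_bound:
  fixes f1 f2 :: "'a::real_inner \<Rightarrow> real"
  assumes grad1: "\<And>x. (f1 has_derivative (\<lambda>h. df1 x \<bullet> h)) (at x)"
    and grad2: "\<And>x. (f2 has_derivative (\<lambda>h. df2 x \<bullet> h)) (at x)"
    and lip1: "L1-lipschitz_on UNIV df1" and lip2: "L2-lipschitz_on UNIV df2"
    and "\<gamma> > 0" and "\<gamma> * L1 \<le> \<alpha>" and "\<gamma> * L2 \<le> 1 - \<alpha>"
    and min: "\<And>y. ereal (f1 x + f2 x) + f3 x \<le> ereal (f1 y + f2 y) + f3 y"
  shows "ereal (f1 x + f2 x) + f3 x \<le> ryu_env \<gamma> \<alpha> f1 f2 f3 df1 df2 z"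
  unfolding ryu_env_def Let_def
proof (rule INF_greatest)
  fix y
  let ?a = "ryu_x1 \<gamma> f1 (fst z)" and ?b = "ryu_x2 \<gamma> \<alpha> f1 f2 (fst z) (snd z)"
  let ?model = "f1 ?a + (y - ?a) \<bullet> df1 ?a + \<alpha> / (2*\<gamma>) * norm (y - ?a)^2
    + f2 ?b + (y - ?b) \<bullet> df2 ?b + (1 - \<alpha>) / (2*\<gamma>) * norm (y - ?b)^2"
  have "L1 / 2 * norm (y - ?a)^2 \<le> \<alpha> / (2*\<gamma>) * norm (y - ?a)^2"
    using \<open>\<gamma> > 0\<close> \<open>\<gamma> * L1 \<le> \<alpha>\<close> by (intro mult_right_mono) (simp_all add: field_simps)
  moreover have "L2 / 2 * norm (y - ?b)^2 \<le> (1 - \<alpha>) / (2*\<gamma>) * norm (y - ?b)^2"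
    using \<open>\<gamma> > 0\<close> \<open>\<gamma> * L2 \<le> 1 - \<alpha>\<close> by (intro mult_right_mono) (simp_all add: field_simps)
  ultimately have "f1 y + f2 y \<le> ?model"
    using descent_lemma[OF grad1 lip1, of y ?a] descent_lemma[OF grad2 lip2, of y ?b]
    by (simp add: inner_commute)
  then have "ereal (f1 y + f2 y) + f3 y \<le> f3 y + ereal ?model"
    by (subst add.commute) (intro add_left_mono, simp)
  with min[of y] show "ereal (f1 x + f2 x) + f3 x \<le> f3 y + ereal ?model"
    by (rule order_trans)
qed

lemma ryu_common_point_critical:
  fixes f1 f2 :: "'a::euclidean_space \<Rightarrow> real" and f3 :: "'a \<Rightarrow> ereal"
  assumes conv1: "convex_on UNIV f1" and conv2: "convex_on UNIV f2"
    and grad1: "\<And>x. (f1 has_derivative (\<lambda>h. df1 x \<bullet> h)) (at x)"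
    and grad2: "\<And>x. (f2 has_derivative (\<lambda>h. df2 x \<bullet> h)) (at x)"
    and "proper_fun f3" and "\<gamma> > 0" and "\<alpha> > 0"
    and x1: "ryu_x1 \<gamma> f1 z1 = x" and x2: "ryu_x2 \<gamma> \<alpha> f1 f2 z1 z2 = x"
    and x3: "x \<in> prox \<gamma> f3 (ryu_x1 \<gamma> f1 z1 - z1 + ryu_x2 \<gamma> \<alpha> f1 f2 z1 z2 - z2)"
  shows "0 \<in> limiting_subdiff (\<lambda>x. ereal (f1 x + f2 x) + f3 x) x"
    and "ereal (f1 x + f2 x) + f3 x = ryu_env \<gamma> \<alpha> f1 f2 f3 df1 df2 (z1, z2)"
proof -
  have "z1 = x + \<gamma> *\<^sub>R df1 x" and "z2 = \<gamma> *\<^sub>R df2 x"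
    using ryu_x1_x2_eq_iff[OF conv1 conv2 grad1 grad2 \<open>\<gamma> > 0\<close> \<open>\<alpha> > 0\<close>] x1 x2 by auto
  then have fixed: "x \<in> prox \<gamma> f3 (x - \<gamma> *\<^sub>R (df1 x + df2 x))"
    using x3 unfolding x1 x2 by (simp add: algebra_simps)
  have conv: "convex_on UNIV (\<lambda>x. f1 x + f2 x)"
    using conv1 conv2 by (rule convex_on_add)
  have grad: "((\<lambda>x. f1 x + f2 x) has_derivative (\<lambda>h. (df1 x + df2 x) \<bullet> h)) (at x)" for x
    using grad1 grad2 by (auto intro!: derivative_eq_intros simp: inner_add_left)
  note fb = forward_backward_fixed_point[OF conv grad \<open>proper_fun f3\<close> \<open>\<gamma> > 0\<close> fixed]
  show "0 \<in> limiting_subdiff (\<lambda>x. ereal (f1 x + f2 x) + f3 x) x"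
    using fb(1) .
  show "ereal (f1 x + f2 x) + f3 x = ryu_env \<gamma> \<alpha> f1 f2 f3 df1 df2 (z1, z2)"
    using fb(2) ryu_env_at_common_point[OF x1 x2] by simp
qed

lemma ryu_env_min_eq:
  fixes f1 f2 :: "'a::euclidean_space \<Rightarrow> real" and f3 :: "'a \<Rightarrow> ereal"
  defines "\<phi> \<equiv> \<lambda>x. ereal (f1 x + f2 x) + f3 x"
  assumes conv1: "convex_on UNIV f1" and conv2: "convex_on UNIV f2"
    and grad1: "\<And>x. (f1 has_derivative (\<lambda>h. df1 x \<bullet> h)) (at x)"
    and grad2: "\<And>x. (f2 has_derivative (\<lambda>h. df2 x \<bullet> h)) (at x)"
    and lip1: "L1-lipschitz_on UNIV df1" and lip2: "L2-lipschitz_on UNIV df2"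
    and "proper_fun f3" and "\<gamma> > 0" and "\<alpha> > 0"
    and "\<gamma> * L1 \<le> \<alpha>" and "\<gamma> * L2 \<le> 1 - \<alpha>"
    and min: "\<And>y. \<phi> x \<le> \<phi> y"
  shows "\<exists>z. (\<forall>z'. ryu_env \<gamma> \<alpha> f1 f2 f3 df1 df2 z \<le> ryu_env \<gamma> \<alpha> f1 f2 f3 df1 df2 z')
            \<and> \<phi> x = ryu_env \<gamma> \<alpha> f1 f2 f3 df1 df2 z"
proof -
  define z1 where "z1 = x + \<gamma> *\<^sub>R df1 x"
  define z2 where "z2 = \<gamma> *\<^sub>R df2 x"
  have x1: "ryu_x1 \<gamma> f1 z1 = x" and x2: "ryu_x2 \<gamma> \<alpha> f1 f2 z1 z2 = x"
    using ryu_x1_x2_eq_iff[OF conv1 conv2 grad1 grad2 \<open>\<gamma> > 0\<close> \<open>\<alpha> > 0\<close>] z1_def z2_def by auto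
  have grad: "((\<lambda>x. f1 x + f2 x) has_derivative (\<lambda>h. (df1 x + df2 x) \<bullet> h)) (at x)" for x
    using grad1 grad2 by (auto intro!: derivative_eq_intros simp: inner_add_left)
  have "\<gamma> * (L1 + L2) \<le> 1"
    using \<open>\<gamma> * L1 \<le> \<alpha>\<close> \<open>\<gamma> * L2 \<le> 1 - \<alpha>\<close> by (simp add: distrib_left)
  then have "x \<in> prox \<gamma> f3 (x - \<gamma> *\<^sub>R (df1 x + df2 x))"
    using min unfolding \<phi>_def
    by (intro minimizer_forward_backward_fixed_point[OF grad lipschitz_on_add[OF lip1 lip2] \<open>\<gamma> > 0\<close>])
  then have x3: "x \<in> prox \<gamma> f3 (ryu_x1 \<gamma> f1 z1 - z1 + ryu_x2 \<gamma> \<alpha> f1 f2 z1 z2 - z2)"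
    unfolding x1 x2 by (simp add: z1_def z2_def algebra_simps)
  have "\<phi> x = ryu_env \<gamma> \<alpha> f1 f2 f3 df1 df2 (z1, z2)"
    unfolding \<phi>_def
    by (rule ryu_common_point_critical(2)[OF conv1 conv2 grad1 grad2 \<open>proper_fun f3\<close> \<open>\<gamma> > 0\<close> \<open>\<alpha> > 0\<close> x1 x2 x3])
  moreover have "\<phi> x \<le> ryu_env \<gamma> \<alpha> f1 f2 f3 df1 df2 z'" for z'
    using min unfolding \<phi>_def
    by (rule ryu_env_lower_bound[OF grad1 grad2 lip1 lip2 \<open>\<gamma> > 0\<close> \<open>\<gamma> * L1 \<le> \<alpha>\<close> \<open>\<gamma> * L2 \<le> 1 - \<alpha>\<close>])
  ultimately show ?thesis
    by metis
qed

theorem proposition4: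
  fixes f1 f2 :: "'a::euclidean_space \<Rightarrow> real"
    and f3 :: "'a \<Rightarrow> ereal"
    and df1 df2 :: "'a \<Rightarrow> 'a"
    and L1 L2 \<gamma> \<alpha> lam :: real
    and z1 z2 :: 'a
  defines "\<phi> \<equiv> (\<lambda>x. ereal (f1 x + f2 x) + f3 x)"
  assumes conv1: "convex_on UNIV f1" and conv2: "convex_on UNIV f2"
    and grad1: "\<And>x. (f1 has_derivative (\<lambda>h. df1 x \<bullet> h)) (at x)"
    and grad2: "\<And>x. (f2 has_derivative (\<lambda>h. df2 x \<bullet> h)) (at x)"
    and L1: "L1 > 0" "L1-lipschitz_on UNIV df1"
    and L2: "L2 > 0" "L2-lipschitz_on UNIV df2"
    and f3: "proper_fun f3" "lsc f3"
    and sol: "\<exists>x. \<forall>y. \<phi> x \<le> \<phi> y"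
    and gam: "0 < \<gamma>" "\<gamma> < 1 / (L1 + L2)"
    and pos: "\<alpha> > 0" "lam > 0"
  shows
    "((z1, z2) \<in> Fix (T_ryu lam \<gamma> \<alpha> f1 f2 f3) \<longleftrightarrow>
        (\<exists>x3 \<in> prox \<gamma> f3 (ryu_x1 \<gamma> f1 z1 - z1 + ryu_x2 \<gamma> \<alpha> f1 f2 z1 z2 - z2).
            ryu_x1 \<gamma> f1 z1 = ryu_x2 \<gamma> \<alpha> f1 f2 z1 z2 \<and> ryu_x2 \<gamma> \<alpha> f1 f2 z1 z2 = x3))
     \<and> (\<forall>x. (x = ryu_x1 \<gamma> f1 z1 \<and> x = ryu_x2 \<gamma> \<alpha> f1 f2 z1 z2 \<and>
              x \<in> prox \<gamma> f3 (ryu_x1 \<gamma> f1 z1 - z1 + ryu_x2 \<gamma> \<alpha> f1 f2 z1 z2 - z2))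
           \<longrightarrow> 0 \<in> limiting_subdiff \<phi> x \<and> \<phi> x = ryu_env \<gamma> \<alpha> f1 f2 f3 df1 df2 (z1, z2))
     \<and> ((\<alpha> < 1 \<and> \<gamma> \<le> min (\<alpha> / L1) ((1 - \<alpha>) / L2)) \<longrightarrow>
          (\<exists>xm zm. (\<forall>x. \<phi> xm \<le> \<phi> x) \<and> (\<forall>z. ryu_env \<gamma> \<alpha> f1 f2 f3 df1 df2 zm \<le> ryu_env \<gamma> \<alpha> f1 f2 f3 df1 df2 z)
                   \<and> \<phi> xm = ryu_env \<gamma> \<alpha> f1 f2 f3 df1 df2 zm))"
proof -
  let ?x1 = "ryu_x1 \<gamma> f1 z1" and ?x2 = "ryu_x2 \<gamma> \<alpha> f1 f2 z1 z2"
    and ?env = "ryu_env \<gamma> \<alpha> f1 f2 f3 df1 df2"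
  have fixed_points: "(z1, z2) \<in> Fix (T_ryu lam \<gamma> \<alpha> f1 f2 f3) \<longleftrightarrow>
      (\<exists>x3 \<in> prox \<gamma> f3 (?x1 - z1 + ?x2 - z2). ?x1 = ?x2 \<and> ?x2 = x3)"
    using \<open>lam > 0\<close> by (simp add: Fix_T_ryu_iff)
  have critical: "0 \<in> limiting_subdiff \<phi> x \<and> \<phi> x = ?env (z1, z2)"
    if "x = ?x1 \<and> x = ?x2 \<and> x \<in> prox \<gamma> f3 (?x1 - z1 + ?x2 - z2)" for x
  proof -
    from that have "?x1 = x" "?x2 = x" "x \<in> prox \<gamma> f3 (?x1 - z1 + ?x2 - z2)"
      by auto
    then show ?thesis
      using ryu_common_point_critical[OF conv1 conv2 grad1 grad2 f3(1) gam(1) pos(1)]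
      unfolding \<phi>_def by blast
  qed
  have minima: "\<exists>xm zm. (\<forall>x. \<phi> xm \<le> \<phi> x) \<and> (\<forall>z. ?env zm \<le> ?env z) \<and> \<phi> xm = ?env zm"
    if "\<gamma> \<le> min (\<alpha> / L1) ((1 - \<alpha>) / L2)"
  proof -
    have "\<gamma> * L1 \<le> \<alpha>" and "\<gamma> * L2 \<le> 1 - \<alpha>"
      using that \<open>L1 > 0\<close> \<open>L2 > 0\<close> by (simp_all add: field_simps)
    moreover obtain xm where "\<And>y. \<phi> xm \<le> \<phi> y"
      using sol by blast
    ultimately show ?thesis
      using ryu_env_min_eq[OF conv1 conv2 grad1 grad2 L1(2) L2(2) f3(1) gam(1) pos(1)]
      unfolding \<phi>_def by blast
  qed
  show ?thesis
    using fixed_points critical minima by blast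
qed

end
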